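(* Let $k\ge 1$ be the cache size. Considering all request sequences, with no restriction on which pages may follow which (equivalently, the complete access graph), \[ \mathcal{I}[\mathrm{FIFO},\mathrm{LRU}]=\left[-1+\frac{1}{k},\ \frac{1}{2}-\frac{1}{4k-2}\right]. \]
   Context: Paging: a cache holds at most $k$ pages and is initially empty. A request sequence is a finite sequence of pages. A request to a page in the cache is a hit; otherwise it is a fault, the page is brought into the cache, and if the cache is full some page is evicted first. $\mathcal{A}(I)$ denotes the number of faults of algorithm $\mathcal{A}$ on $I$. LRU evicts the cached page whose most recent request is earliest. FIFO evicts the cached page that entered the cache earliest. Relative interval: for algorithms $\mathcal{A},\mathcal{B}$ and a set of allowed sequences (here all sequences), let $\mathrm{Min}_{\mathcal{A},\mathcal{B}}(n)=\min_{|I|=n}\{\mathcal{A}(I)-\mathcal{B}(I)\}$ and $\mathrm{Max}_{\mathcal{A},\mathcal{B}}(n)=\max_{|I|=n}\{\mathcal{A}(I)-\mathcal{B}(I)\}$, the min/max being over allowed sequences of length $n$; $\mathrm{Min}(\mathcal{A},\mathcal{B})=\liminf_{n\to\infty}\mathrm{Min}_{\mathcal{A},\mathcal{B}}(n)/n$, $\mathrm{Max}(\mathcal{A},\mathcal{B})=\limsup_{n\to\infty}\mathrm{Max}_{\mathcal{A},\mathcal{B}}(n)/n$, and $\mathcal{I}[\mathcal{A},\mathcal{B}]=[\mathrm{Min}(\mathcal{A},\mathcal{B}),\mathrm{Max}(\mathcal{A},\mathcal{B})]$. *)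

theory Defs
  imports "HOL-Library.Extended_Real"
begin

type_synonym page = nat

text \<open>LRU: the cache is a list ordered by recency of last request (most recent first).\<close>
fun lru_faults :: "nat \<Rightarrow> page list \<Rightarrow> page list \<Rightarrow> nat" where
  "lru_faults k c [] = 0"
| "lru_faults k c (p # ps) =
     (if p \<in> set c then lru_faults k (p # removeAll p c) ps
      else Suc (lru_faults k (p # take (k - 1) c) ps))"

text \<open>FIFO: the cache is a list ordered by time of entry (newest first).\<close>
fun fifo_faults :: "nat \<Rightarrow> page list \<Rightarrow> page list \<Rightarrow> nat" where
  "fifo_faults k c [] = 0"
| "fifo_faults k c (p # ps) =
     (if p \<in> set c then fifo_faults k c ps
      else Suc (fifo_faults k (p # take (k - 1) c) ps))"

definition LRU :: "nat \<Rightarrow> page list \<Rightarrow> nat" where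
  "LRU k I = lru_faults k [] I"

definition FIFO :: "nat \<Rightarrow> page list \<Rightarrow> nat" where
  "FIFO k I = fifo_faults k [] I"

definition MinAB :: "(page list \<Rightarrow> nat) \<Rightarrow> (page list \<Rightarrow> nat) \<Rightarrow> nat \<Rightarrow> int" where
  "MinAB A B n = Min {int (A I) - int (B I) | I. length I = n}"

definition MaxAB :: "(page list \<Rightarrow> nat) \<Rightarrow> (page list \<Rightarrow> nat) \<Rightarrow> nat \<Rightarrow> int" where
  "MaxAB A B n = Max {int (A I) - int (B I) | I. length I = n}"

definition MinRel :: "(page list \<Rightarrow> nat) \<Rightarrow> (page list \<Rightarrow> nat) \<Rightarrow> ereal" where
  "MinRel A B = liminf (\<lambda>n. ereal (real_of_int (MinAB A B n) / real n))"

definition MaxRel :: "(page list \<Rightarrow> nat) \<Rightarrow> (page list \<Rightarrow> nat) \<Rightarrow> ereal" where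
  "MaxRel A B = limsup (\<lambda>n. ereal (real_of_int (MaxAB A B n) / real n))"

definition rel_interval :: "(page list \<Rightarrow> nat) \<Rightarrow> (page list \<Rightarrow> nat) \<Rightarrow> ereal \<times> ereal" where
  "rel_interval A B = (MinRel A B, MaxRel A B)"

end

theory Submission
  imports Defs
begin

text \<open>On a fault, FIFO and LRU both put the requested page in front of their cache list and evict
  the last page; they differ only on hits, where LRU moves the page to the front. So the two caches
  hold the same pages until both are full.

  The bounds (2k - 1)(FIFO(I) - LRU(I)) \<le> (k - 1)|I| and k(LRU(I) - FIFO(I)) \<le> (k - 1)|I| are
  proved by amortisation over the joint run, with a potential that vanishes on empty caches, is
  never negative, and on every request absorbs the weighted fault difference up to k - 1. For the
  second bound the potential is the length of LRU's list from its most recent page missing in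
  FIFO's cache. For the first it is the analogous length of FIFO's list plus k - 1 times the number
  of LRU pages that are not records, a record being a page of FIFO's list, read from the newest
  page on and before the first page missing in LRU's cache, that was used less recently than all
  newer FIFO pages.

  Both bounds are attained asymptotically. On a window of k consecutive pages c, ..., c + k - 1,
  the requests c + 1, ..., c + k - 1, c + k, c + k - 1, ..., c + 1 cost FIFO k faults and LRU one,
  the requests c + k, c + k - 1, ..., c + 1 cost LRU k faults and FIFO one, and both shift the
  window by one page.\<close>

section \<open>Fault counting\<close>

definition fifo_step :: "nat \<Rightarrow> page list \<Rightarrow> page \<Rightarrow> page list" where
  "fifo_step k F p = (if p \<in> set F then F else p # take (k - 1) F)"

definition lru_step :: "nat \<Rightarrow> page list \<Rightarrow> page \<Rightarrow> page list" where
  "lru_step k L p = (if p \<in> set L then p # removeAll p L else p # take (k - 1) L)"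

fun faults :: "(page list \<Rightarrow> page \<Rightarrow> page list) \<Rightarrow> page list \<Rightarrow> page list \<Rightarrow> nat" where
  "faults step C [] = 0"
| "faults step C (p # ps) = of_bool (p \<notin> set C) + faults step (step C p) ps"

lemma fifo_faults_eq_faults: "fifo_faults k C ps = faults (fifo_step k) C ps"
  by (induction ps arbitrary: C) (simp_all add: fifo_step_def)

lemma lru_faults_eq_faults: "lru_faults k C ps = faults (lru_step k) C ps"
  by (induction ps arbitrary: C) (simp_all add: lru_step_def)

lemma faults_le_length: "faults step C ps \<le> length ps"
  by (induction ps arbitrary: C) (auto intro: le_SucI)

lemma FIFO_le_length: "FIFO k I \<le> length I"
  by (simp add: FIFO_def fifo_faults_eq_faults faults_le_length)

lemma LRU_le_length: "LRU k I \<le> length I"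
  by (simp add: LRU_def lru_faults_eq_faults faults_le_length)

lemma faults_append:
  "faults step C (xs @ ys) = faults step C xs + faults step (foldl step C xs) ys"
  by (induction xs arbitrary: C) simp_all

definition evicts_last :: "nat \<Rightarrow> (page list \<Rightarrow> page \<Rightarrow> page list) \<Rightarrow> bool" where
  "evicts_last k step \<longleftrightarrow> (\<forall>C p. p \<notin> set C \<longrightarrow> step C p = p # take (k - 1) C)"

lemma evicts_last_fifo_step: "evicts_last k (fifo_step k)"
  by (simp add: evicts_last_def fifo_step_def)

lemma evicts_last_lru_step: "evicts_last k (lru_step k)"
  by (simp add: evicts_last_def lru_step_def)

lemma evicts_last_full:
  assumes "evicts_last k step" "p \<notin> set C" "length C = k"
  shows "step C p = p # butlast C"
  using assms by (auto simp: evicts_last_def butlast_conv_take)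

section \<open>Upper bounds by amortisation\<close>

lemma ex_notin_if_set_neq:
  assumes "distinct xs" "distinct ys" "length xs = length ys" "set xs \<noteq> set ys"
  shows "\<exists>x\<in>set xs. x \<notin> set ys"
proof (rule ccontr)
  assume "\<not> ?thesis"
  then have "set xs \<subseteq> set ys" by auto
  moreover have "card (set xs) = card (set ys)"
    using assms by (simp add: distinct_card)
  ultimately show False
    using assms(4) by (simp add: card_subset_eq)
qed

lemma length_move_to_front:
  assumes "distinct L" "p \<in> set L"
  shows "length (p # removeAll p L) = length L"
proof -
  have "length (removeAll p L) = length L - 1"
    using assms by (metis distinct_remove1_removeAll length_remove1)
  moreover have "0 < length L"
    using assms(2) by (rule length_pos_if_in_set)
  ultimately show ?thesis by simp
qed

lemma in_set_butlast_if_not_last: "y \<in> set xs \<Longrightarrow> y \<noteq> last xs \<Longrightarrow> y \<in> set (butlast xs)"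
  by (induction xs) auto

definition cache_pair_inv :: "nat \<Rightarrow> page list \<Rightarrow> page list \<Rightarrow> bool" where
  "cache_pair_inv k F L \<longleftrightarrow> distinct F \<and> distinct L \<and> length F = length L \<and> length L \<le> k
     \<and> (length L < k \<longrightarrow> set F = set L)"

lemma cache_pair_inv_Nil: "cache_pair_inv k [] []"
  by (simp add: cache_pair_inv_def)

lemma cache_pair_inv_step:
  assumes "1 \<le> k" "cache_pair_inv k F L"
  shows "cache_pair_inv k (fifo_step k F p) (lru_step k L p)"
proof (cases "length L < k")
  case True
  with assms have "set F = set L" "distinct F" "distinct L" "length F = length L"
    by (auto simp: cache_pair_inv_def)
  moreover have "p \<in> set L \<Longrightarrow> length (p # removeAll p L) = length L"
    using \<open>distinct L\<close> by (rule length_move_to_front)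
  ultimately show ?thesis
    using True by (auto simp: cache_pair_inv_def fifo_step_def lru_step_def distinct_removeAll)
next
  case False
  with assms have "distinct F" "distinct L" "length F = k" "length L = k"
    by (auto simp: cache_pair_inv_def)
  moreover have "p \<in> set L \<Longrightarrow> length (p # removeAll p L) = length L"
    using \<open>distinct L\<close> by (rule length_move_to_front)
  ultimately show ?thesis
    using assms(1) by (auto simp: cache_pair_inv_def fifo_step_def lru_step_def distinct_removeAll
        dest: in_set_takeD)
qed

lemma cache_pair_inv_full:
  "cache_pair_inv k F L \<Longrightarrow> set F \<noteq> set L \<Longrightarrow> length F = k \<and> length L = k"
  by (auto simp: cache_pair_inv_def)

text \<open>Left-to-right maxima of \<open>key\<close> that are at least \<open>m\<close>, along the longest prefix of
  \<open>xs\<close> inside \<open>A\<close>.\<close>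
fun records :: "('a \<Rightarrow> nat) \<Rightarrow> 'a set \<Rightarrow> nat \<Rightarrow> 'a list \<Rightarrow> nat" where
  "records key A m [] = 0"
| "records key A m (x # xs) =
     (if x \<notin> A then 0
      else if m \<le> key x then Suc (records key A (Suc (key x)) xs)
      else records key A m xs)"

lemma records_le_length: "records key A m xs \<le> length xs"
  by (induction xs arbitrary: m) (auto intro: le_SucI)

lemma records_eq_0: "\<forall>z\<in>set xs. z \<in> A \<longrightarrow> key z < m \<Longrightarrow> records key A m xs = 0"
  by (induction xs) auto

lemma records_mono:
  assumes "\<forall>y\<in>set xs. y \<in> A \<longrightarrow> y \<in> A'"
    and "\<forall>y\<in>set xs. y \<in> A \<longrightarrow> m \<le> key y \<longrightarrow> m' \<le> key' y"
    and "\<forall>y\<in>set xs. \<forall>z\<in>set xs. y \<in> A \<longrightarrow> z \<in> A \<longrightarrow> key y < key z \<longrightarrow> key' y < key' z"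
  shows "records key A m xs \<le> records key' A' m' xs"
  using assms
proof (induction xs arbitrary: m m')
  case (Cons x xs)
  have IH: "records key A n xs \<le> records key' A' n' xs"
    if "\<forall>y\<in>set xs. y \<in> A \<longrightarrow> n \<le> key y \<longrightarrow> n' \<le> key' y" for n n'
    using Cons that by simp
  show ?case
    using Cons.prems IH[of "Suc (key x)" "Suc (key' x)"] IH[of m "Suc (key' x)"] IH[of m m']
    by (auto simp: Suc_le_eq intro: le_SucI)
qed simp

lemma records_antimono: "m \<le> m' \<Longrightarrow> records key A m' xs \<le> records key A m xs"
  by (rule records_mono) auto

lemma records_removeAll_below:
  "b \<in> A \<Longrightarrow> key b < m \<Longrightarrow> records key A m (removeAll b xs) = records key A m xs"
  by (induction xs arbitrary: m) auto

lemma records_removeAll: "records key A m xs \<le> Suc (records key A m (removeAll b xs))"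
proof (induction xs arbitrary: m)
  case (Cons x xs)
  then show ?case
    using records_antimono[of m "Suc (key x)" key A "removeAll b xs"]
      records_removeAll_below[of x A key "Suc (key x)" xs]
    by (auto intro: le_trans)
qed simp

lemma records_takeWhile_max:
  "\<forall>z\<in>set xs. z \<in> A \<longrightarrow> key z \<le> key b \<Longrightarrow>
   records key A m xs \<le> Suc (records key A m (takeWhile (\<lambda>x. x \<noteq> b) xs))"
proof (induction xs arbitrary: m)
  case (Cons x xs)
  show ?case
  proof (cases "x = b")
    case True
    have "records key A n xs = 0" if "key b < n" for n
      using Cons.prems that by (intro records_eq_0) fastforce
    with True show ?thesis by simp
  next
    case False
    with Cons show ?thesis by simp
  qed
qed simp

lemma records_append: "records key A m xs \<le> records key A m (xs @ ys)"
  by (induction xs arbitrary: m) auto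

lemma records_butlast:
  "\<exists>y\<in>set xs. y \<notin> A \<Longrightarrow> records key A m (butlast xs) = records key A m xs"
proof (induction xs arbitrary: m)
  case (Cons x xs)
  then show ?case by (cases xs) auto
qed simp

fun index_of :: "'a list \<Rightarrow> 'a \<Rightarrow> nat" where
  "index_of [] x = 0"
| "index_of (y # ys) x = (if y = x then 0 else Suc (index_of ys x))"

lemma index_of_le_last:
  "distinct xs \<Longrightarrow> y \<in> set xs \<Longrightarrow> index_of xs y \<le> index_of xs (last xs)"
proof (induction xs)
  case (Cons x xs)
  show ?case
  proof (cases "xs = []")
    case False
    then have "last (x # xs) = last xs" "last xs \<noteq> x"
      using Cons.prems(1) last_in_set by fastforce+
    with Cons show ?thesis by auto
  qed (use Cons.prems in simp)
qed simp

lemma index_of_removeAll_less: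
  "y \<noteq> p \<Longrightarrow> z \<noteq> p \<Longrightarrow> index_of xs y < index_of xs z \<Longrightarrow>
   index_of (removeAll p xs) y < index_of (removeAll p xs) z"
  by (induction xs) auto

lemma index_of_butlast: "y \<in> set (butlast xs) \<Longrightarrow> index_of xs y = index_of (butlast xs) y"
  by (induction xs) auto

lemma records_move_to_front:
  assumes "p \<notin> set xs"
  shows "records (index_of L) (set L) 0 xs
       \<le> records (index_of (p # removeAll p L)) (insert p (set L)) 1 xs"
proof (rule records_mono)
  show "\<forall>y\<in>set xs. \<forall>z\<in>set xs. y \<in> set L \<longrightarrow> z \<in> set L \<longrightarrow> index_of L y < index_of L z \<longrightarrow>
      index_of (p # removeAll p L) y < index_of (p # removeAll p L) z"
    using assms by (auto intro: index_of_removeAll_less)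
qed (use assms in auto)

lemma records_lru_hit:
  assumes "p \<in> set L"
  shows "records (index_of L) (set L) 0 xs
       \<le> Suc (records (index_of (p # removeAll p L)) (set L) 0 xs)"
proof -
  let ?key' = "index_of (p # removeAll p L)"
  have "records (index_of L) (set L) 0 xs \<le> Suc (records (index_of L) (set L) 0 (removeAll p xs))"
    by (rule records_removeAll)
  also have "\<dots> \<le> Suc (records ?key' (set L) 1 (removeAll p xs))"
    using records_move_to_front[of p "removeAll p xs" L] assms by (simp add: insert_absorb)
  also have "\<dots> = Suc (records ?key' (set L) 1 xs)"
    using assms by (simp add: records_removeAll_below)
  also have "\<dots> \<le> Suc (records ?key' (set L) 0 xs)"
    by (simp add: records_antimono)
  finally show ?thesis .
qed

text \<open>The evicted page has the largest recency rank, so at most one record is lost before it.\<close>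
lemma records_lru_evict:
  assumes "distinct L" "p \<notin> set L"
  shows "records (index_of L) (set L) 0 xs
       \<le> Suc (records (index_of (p # butlast L)) (set (p # butlast L)) 1 xs)"
proof -
  let ?key' = "index_of (p # butlast L)" and ?ys = "takeWhile (\<lambda>x. x \<noteq> last L) xs"
  have "records (index_of L) (set L) 0 xs \<le> Suc (records (index_of L) (set L) 0 ?ys)"
    using assms(1) by (intro records_takeWhile_max) (simp add: index_of_le_last)
  also have "records (index_of L) (set L) 0 ?ys \<le> records ?key' (set (p # butlast L)) 1 ?ys"
  proof (rule records_mono)
    have "y \<in> set (butlast L) \<and> ?key' y = Suc (index_of L y)" if "y \<in> set ?ys" "y \<in> set L" for y
      using that assms(2) in_set_butlast_if_not_last[of y L] set_takeWhileD[OF that(1)]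
      by (auto simp: index_of_butlast)
    then show "\<forall>y\<in>set ?ys. y \<in> set L \<longrightarrow> y \<in> set (p # butlast L)"
      "\<forall>y\<in>set ?ys. y \<in> set L \<longrightarrow> 0 \<le> index_of L y \<longrightarrow> 1 \<le> ?key' y"
      "\<forall>y\<in>set ?ys. \<forall>z\<in>set ?ys. y \<in> set L \<longrightarrow> z \<in> set L \<longrightarrow>
        index_of L y < index_of L z \<longrightarrow> ?key' y < ?key' z"
      by auto
  qed
  also have "records ?key' (set (p # butlast L)) 1 ?ys \<le> records ?key' (set (p # butlast L)) 1 xs"
    using records_append[of ?key' _ 1 ?ys "dropWhile (\<lambda>x. x \<noteq> last L) xs"] by simp
  finally show ?thesis by simp
qed

definition nonrecords :: "page list \<Rightarrow> page list \<Rightarrow> int" where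
  "nonrecords F L = int (length L) - int (records (index_of L) (set L) 0 F)"

lemma nonrecords_nonneg: "cache_pair_inv k F L \<Longrightarrow> 0 \<le> nonrecords F L"
  using records_le_length[of "index_of L" "set L" 0 F] by (simp add: nonrecords_def cache_pair_inv_def)

lemma nonrecords_hit_hit:
  assumes "cache_pair_inv k F L" "p \<in> set F" "p \<in> set L"
  shows "nonrecords (fifo_step k F p) (lru_step k L p) \<le> nonrecords F L + 1"
proof -
  have "length (p # removeAll p L) = length L"
    using assms by (intro length_move_to_front) (auto simp: cache_pair_inv_def)
  moreover have "set (p # removeAll p L) = set L"
    using assms(3) by auto
  ultimately show ?thesis
    using records_lru_hit[OF assms(3), of F] assms(2,3)
    by (simp add: nonrecords_def fifo_step_def lru_step_def)
qed

lemma nonrecords_hit_fault: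
  assumes "cache_pair_inv k F L" "p \<in> set F" "p \<notin> set L"
  shows "nonrecords (fifo_step k F p) (lru_step k L p) \<le> nonrecords F L + 1"
proof -
  have "length L = k" "distinct L" "L \<noteq> []"
    using cache_pair_inv_full[OF assms(1)] assms by (auto simp: cache_pair_inv_def)
  then have L': "lru_step k L p = p # butlast L" "length (p # butlast L) = length L"
    using evicts_last_full[OF evicts_last_lru_step assms(3)] by auto
  have "records (index_of L) (set L) 0 F
      \<le> Suc (records (index_of (p # butlast L)) (set (p # butlast L)) 0 F)"
    using records_lru_evict[OF \<open>distinct L\<close> assms(3), of F]
      records_antimono[of 0 1 "index_of (p # butlast L)" "set (p # butlast L)" F]
    by linarith
  then show ?thesis
    using L' assms(2) by (simp add: nonrecords_def fifo_step_def)
qed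

lemma nonrecords_fault_hit:
  assumes "cache_pair_inv k F L" "p \<notin> set F" "p \<in> set L"
  shows "nonrecords (fifo_step k F p) (lru_step k L p) + 1 \<le> nonrecords F L"
proof -
  have full: "length F = k" and "distinct F" "distinct L" "length F = length L"
    using cache_pair_inv_full[OF assms(1)] assms by (auto simp: cache_pair_inv_def)
  then obtain y where "y \<in> set F" "y \<notin> set L"
    using ex_notin_if_set_neq assms(2,3) by blast
  then have "records (index_of L) (set L) 0 F = records (index_of L) (set L) 0 (butlast F)"
    by (metis records_butlast)
  also have "\<dots> \<le> records (index_of (p # removeAll p L)) (set L) 1 (butlast F)"
    using records_move_to_front[of p "butlast F" L] assms(2,3)
    by (auto simp: insert_absorb dest: in_set_butlastD)
  moreover have "fifo_step k F p = p # butlast F"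
    using evicts_last_full[OF evicts_last_fifo_step assms(2) full] .
  ultimately show ?thesis
    using assms full length_move_to_front[OF \<open>distinct L\<close> assms(3)] \<open>length F = length L\<close>
    by (simp add: nonrecords_def lru_step_def insert_absorb)
qed

lemma nonrecords_fault_fault:
  assumes "1 \<le> k" "cache_pair_inv k F L" "p \<notin> set F" "p \<notin> set L"
  shows "nonrecords (fifo_step k F p) (lru_step k L p) \<le> nonrecords F L"
proof (cases "length L < k")
  case True
  with assms(2) have "set F = set L" "length L \<le> k - 1"
    by (auto simp: cache_pair_inv_def)
  moreover have "records (index_of L) (set L) 0 F \<le> records (index_of (p # L)) (set (p # L)) 1 F"
    using records_move_to_front[of p F L] assms(3,4) by simp
  ultimately show ?thesis
    using assms(2-4) by (simp add: nonrecords_def fifo_step_def lru_step_def cache_pair_inv_def)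
next
  case False
  let ?L' = "p # butlast L"
  from False assms(2) have "distinct F" "distinct L" "length F = k" "length L = k"
    by (auto simp: cache_pair_inv_def)
  moreover from this have "distinct ?L'" "length ?L' = k"
    using assms(1,4) by (auto simp: distinct_butlast dest: in_set_butlastD)
  ultimately obtain y where "y \<in> set F" "y \<notin> set ?L'"
    using ex_notin_if_set_neq[of F ?L'] assms(3) by auto
  then have "records (index_of ?L') (set ?L') 1 (butlast F) = records (index_of ?L') (set ?L') 1 F"
    by (metis records_butlast)
  moreover have "fifo_step k F p = p # butlast F" "lru_step k L p = ?L'"
    using evicts_last_full[OF evicts_last_fifo_step assms(3) \<open>length F = k\<close>]
      evicts_last_full[OF evicts_last_lru_step assms(4) \<open>length L = k\<close>] .
  ultimately show ?thesis
    using records_lru_evict[OF \<open>distinct L\<close> assms(4), of F] assms(3)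
      \<open>length L = k\<close> \<open>length ?L' = k\<close>
    by (simp add: nonrecords_def)
qed

definition suffix_from_missing :: "page list \<Rightarrow> page list \<Rightarrow> nat" where
  "suffix_from_missing C D = length (dropWhile (\<lambda>x. x \<in> set D) C)"

lemma suffix_from_missing_le_length: "suffix_from_missing C D \<le> length C"
  by (simp add: suffix_from_missing_def length_dropWhile_le)

lemma suffix_from_missing_Cons:
  "p \<in> set D \<Longrightarrow> suffix_from_missing (p # C) D = suffix_from_missing C D"
  by (simp add: suffix_from_missing_def)

lemma suffix_from_missing_butlast:
  "\<exists>x\<in>set C. x \<notin> set D \<Longrightarrow> suffix_from_missing (butlast C) D < suffix_from_missing C D"
  unfolding suffix_from_missing_def
proof (induction C)
  case (Cons x C)
  then show ?case
    using length_dropWhile_le[of _ "butlast (x # C)"] by (cases "x \<in> set D") auto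
qed simp

lemma suffix_from_missing_removeAll:
  "p \<in> set D \<Longrightarrow> suffix_from_missing (removeAll p C) D \<le> suffix_from_missing C D"
  unfolding suffix_from_missing_def by (induction C) (auto simp: length_removeAll_less_eq)

lemma suffix_from_missing_fifo_lru_step:
  fixes p :: page
  assumes "1 \<le> k" "cache_pair_inv k F L"
  defines "R \<equiv> suffix_from_missing F L"
    and "R' \<equiv> suffix_from_missing (fifo_step k F p) (lru_step k L p)"
  shows "R' \<le> k"
    and "p \<in> set F \<Longrightarrow> p \<in> set L \<Longrightarrow> R' = R"
    and "p \<notin> set F \<Longrightarrow> p \<in> set L \<Longrightarrow> R' < R"
    and "p \<notin> set F \<Longrightarrow> p \<notin> set L \<Longrightarrow> R' < k"
proof -
  have "length (fifo_step k F p) \<le> k"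
    using cache_pair_inv_step[OF assms(1,2), of p] by (simp add: cache_pair_inv_def)
  then show "R' \<le> k"
    using suffix_from_missing_le_length[of "fifo_step k F p" "lru_step k L p"] by (simp add: R'_def)
  show "R' = R" if "p \<in> set F" "p \<in> set L"
  proof -
    have "fifo_step k F p = F" "set (lru_step k L p) = set L"
      using that by (auto simp: fifo_step_def lru_step_def)
    then show ?thesis
      by (simp add: R_def R'_def suffix_from_missing_def)
  qed
  show "R' < R" if "p \<notin> set F" "p \<in> set L"
  proof -
    have "length F = k" "distinct F" "distinct L" "length F = length L"
      using cache_pair_inv_full[OF assms(2)] that assms(2) by (auto simp: cache_pair_inv_def)
    then have "suffix_from_missing (butlast F) L < R"
      unfolding R_def using ex_notin_if_set_neq that by (blast intro: suffix_from_missing_butlast)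
    moreover have "fifo_step k F p = p # butlast F"
      using evicts_last_full[OF evicts_last_fifo_step] that \<open>length F = k\<close> by blast
    moreover have "set (lru_step k L p) = set L"
      using that by (auto simp: lru_step_def)
    ultimately show ?thesis
      using that by (simp add: R'_def suffix_from_missing_def)
  qed
  show "R' < k" if "p \<notin> set F" "p \<notin> set L"
    using that assms(1) suffix_from_missing_le_length[of "take (k - 1) F" "lru_step k L p"]
    by (simp add: R'_def fifo_step_def lru_step_def suffix_from_missing_Cons) linarith
qed

lemma suffix_from_missing_lru_fifo_step:
  fixes p :: page
  assumes "1 \<le> k" "cache_pair_inv k F L"
  defines "R \<equiv> suffix_from_missing L F"
    and "R' \<equiv> suffix_from_missing (lru_step k L p) (fifo_step k F p)"
  shows "R' \<le> k"
    and "p \<in> set F \<Longrightarrow> p \<in> set L \<Longrightarrow> R' \<le> R"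
    and "p \<in> set F \<Longrightarrow> p \<notin> set L \<Longrightarrow> R' < R"
    and "p \<notin> set F \<Longrightarrow> p \<notin> set L \<Longrightarrow> R' < k"
proof -
  have "length (lru_step k L p) \<le> k"
    using cache_pair_inv_step[OF assms(1,2), of p] by (simp add: cache_pair_inv_def)
  then show "R' \<le> k"
    using suffix_from_missing_le_length[of "lru_step k L p" "fifo_step k F p"] by (simp add: R'_def)
  show "R' \<le> R" if "p \<in> set F" "p \<in> set L"
    using that suffix_from_missing_removeAll[of p F L]
    by (simp add: R_def R'_def fifo_step_def lru_step_def suffix_from_missing_Cons)
  show "R' < R" if "p \<in> set F" "p \<notin> set L"
  proof -
    have "length L = k" "distinct F" "distinct L" "length L = length F"
      using cache_pair_inv_full[OF assms(2)] that assms(2) by (auto simp: cache_pair_inv_def)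
    then have "suffix_from_missing (butlast L) F < R"
      unfolding R_def using ex_notin_if_set_neq that by (blast intro: suffix_from_missing_butlast)
    moreover have "lru_step k L p = p # butlast L"
      using evicts_last_full[OF evicts_last_lru_step] that \<open>length L = k\<close> by blast
    ultimately show ?thesis
      using that by (simp add: R'_def fifo_step_def suffix_from_missing_Cons)
  qed
  show "R' < k" if "p \<notin> set F" "p \<notin> set L"
    using that assms(1) suffix_from_missing_le_length[of "take (k - 1) L" "fifo_step k F p"]
    by (simp add: R'_def fifo_step_def lru_step_def suffix_from_missing_Cons) linarith
qed

definition potential_fifo_lru :: "nat \<Rightarrow> page list \<Rightarrow> page list \<Rightarrow> int" where
  "potential_fifo_lru k F L = int (suffix_from_missing F L) + (int k - 1) * nonrecords F L"

lemma potential_fifo_lru_nonneg: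
  "1 \<le> k \<Longrightarrow> cache_pair_inv k F L \<Longrightarrow> 0 \<le> potential_fifo_lru k F L"
  using nonrecords_nonneg[of k F L] by (simp add: potential_fifo_lru_def)

lemma potential_fifo_lru_amortized:
  assumes "1 \<le> k" "cache_pair_inv k F L"
  shows "(2 * int k - 1) * (of_bool (p \<notin> set F) - of_bool (p \<notin> set L))
           + potential_fifo_lru k (fifo_step k F p) (lru_step k L p)
         \<le> potential_fifo_lru k F L + (int k - 1)"
proof -
  let ?F' = "fifo_step k F p" and ?L' = "lru_step k L p"
  have weighted: "(int k - 1) * nonrecords ?F' ?L' \<le> (int k - 1) * nonrecords F L + (int k - 1) * d"
    if "nonrecords ?F' ?L' \<le> nonrecords F L + d" for d
    using mult_left_mono[OF that, of "int k - 1"] assms(1) by (simp add: algebra_simps)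
  note R = suffix_from_missing_fifo_lru_step[OF assms, of p]
  consider "p \<in> set F" "p \<in> set L" | "p \<in> set F" "p \<notin> set L" | "p \<notin> set F" "p \<in> set L"
    | "p \<notin> set F" "p \<notin> set L" by blast
  then show ?thesis
  proof cases
    case 1
    then show ?thesis
      using weighted[OF nonrecords_hit_hit[OF assms(2) 1]] R(2)[OF 1]
      by (simp add: potential_fifo_lru_def)
  next
    case 2
    then show ?thesis
      using weighted[OF nonrecords_hit_fault[OF assms(2) 2]] R(1) assms(1)
      by (simp add: potential_fifo_lru_def)
  next
    case 3
    then show ?thesis
      using weighted[of "-1"] nonrecords_fault_hit[OF assms(2) 3] R(3)[OF 3]
      by (simp add: potential_fifo_lru_def)
  next
    case 4
    then show ?thesis
      using weighted[OF _, of 0] nonrecords_fault_fault[OF assms 4] R(4)[OF 4]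
      by (simp add: potential_fifo_lru_def)
  qed
qed

lemma suffix_from_missing_lru_fifo_amortized:
  assumes "1 \<le> k" "cache_pair_inv k F L"
  shows "int k * (of_bool (p \<notin> set L) - of_bool (p \<notin> set F))
           + int (suffix_from_missing (lru_step k L p) (fifo_step k F p))
         \<le> int (suffix_from_missing L F) + (int k - 1)"
  using suffix_from_missing_lru_fifo_step[OF assms, of p] assms(1)
  by (cases "p \<in> set F"; cases "p \<in> set L") auto

lemma faults_diff_le_potential:
  fixes \<Phi> :: "page list \<Rightarrow> page list \<Rightarrow> int"
  assumes step: "\<And>C D p. P C D \<Longrightarrow> P (step C p) (step' D p)"
    and amortized: "\<And>C D p. P C D \<Longrightarrow>
      a * (of_bool (p \<notin> set C) - of_bool (p \<notin> set D)) + \<Phi> (step C p) (step' D p) \<le> \<Phi> C D + b"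
    and nonneg: "\<And>C D. P C D \<Longrightarrow> 0 \<le> \<Phi> C D"
    and "P C D"
  shows "a * (int (faults step C ps) - int (faults step' D ps)) \<le> b * int (length ps) + \<Phi> C D"
  using \<open>P C D\<close>
proof (induction ps arbitrary: C D)
  case (Cons p ps)
  then have "a * (int (faults step (step C p) ps) - int (faults step' (step' D p) ps))
      \<le> b * int (length ps) + \<Phi> (step C p) (step' D p)"
    using step by blast
  then show ?case
    using amortized[OF Cons.prems, of p] by (simp add: algebra_simps)
qed (simp add: nonneg)

theorem fifo_minus_lru_le:
  assumes "1 \<le> k"
  shows "(2 * int k - 1) * (int (FIFO k I) - int (LRU k I)) \<le> (int k - 1) * int (length I)"
  using faults_diff_le_potential[where P = "cache_pair_inv k" and \<Phi> = "potential_fifo_lru k",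
      OF cache_pair_inv_step potential_fifo_lru_amortized potential_fifo_lru_nonneg
      cache_pair_inv_Nil] assms
  by (simp add: FIFO_def LRU_def fifo_faults_eq_faults lru_faults_eq_faults potential_fifo_lru_def
      suffix_from_missing_def nonrecords_def)

theorem lru_minus_fifo_le:
  assumes "1 \<le> k"
  shows "int k * (int (LRU k I) - int (FIFO k I)) \<le> (int k - 1) * int (length I)"
  using faults_diff_le_potential[where P = "\<lambda>L F. cache_pair_inv k F L"
      and \<Phi> = "\<lambda>L F. int (suffix_from_missing L F)",
      OF cache_pair_inv_step suffix_from_missing_lru_fifo_amortized _ cache_pair_inv_Nil] assms
  by (simp add: FIFO_def LRU_def fifo_faults_eq_faults lru_faults_eq_faults suffix_from_missing_def)

section \<open>Sequences attaining the bounds\<close>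

lemma faults_concat_rounds:
  assumes "\<And>c. foldl step (S c) (r c) = S (Suc c) \<and> faults step (S c) (r c) = f"
  shows "foldl step (S 0) (concat (map r [0..<m])) = S m
       \<and> faults step (S 0) (concat (map r [0..<m])) = f * m"
  by (induction m) (simp_all add: faults_append assms)

lemma faults_fill:
  assumes "evicts_last k step" "distinct ps" "length ps \<le> k"
  shows "foldl step [] ps = rev ps \<and> faults step [] ps = length ps"
  using assms(2,3)
proof (induction ps rule: rev_induct)
  case (snoc p ps)
  then have "step (rev ps) p = p # rev ps"
    using assms(1) by (simp add: evicts_last_def)
  with snoc show ?case by (simp add: faults_append)
qed simp

text \<open>A fault on a full cache evicts exactly the page requested next, so all requests fault.\<close>
lemma faults_cascade:
  assumes "evicts_last k step" "length (xs @ y # zs) = k" "distinct (p # xs @ y # zs)"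
  shows "foldl step (xs @ y # zs) (p # rev zs) = zs @ p # xs
       \<and> faults step (xs @ y # zs) (p # rev zs) = Suc (length zs)"
  using assms(2,3)
proof (induction zs arbitrary: xs p rule: rev_induct)
  case Nil
  then have "step (xs @ [y]) p = p # xs"
    using assms(1) by (simp add: evicts_last_def)
  with Nil show ?case by simp
next
  case (snoc z zs)
  then have "step (xs @ y # zs @ [z]) p = (p # xs) @ y # zs"
    using evicts_last_full[OF assms(1), of p "xs @ y # zs @ [z]"] by (simp add: butlast_append)
  moreover have "foldl step ((p # xs) @ y # zs) (z # rev zs) = zs @ z # p # xs
      \<and> faults step ((p # xs) @ y # zs) (z # rev zs) = Suc (length zs)"
    using snoc.IH[of "p # xs" z] snoc.prems by auto
  ultimately show ?case using snoc.prems by simp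
qed

lemma fifo_hits:
  "set ps \<subseteq> set C \<Longrightarrow> foldl (fifo_step k) C ps = C \<and> faults (fifo_step k) C ps = 0"
  by (induction ps) (auto simp: fifo_step_def)

lemma lru_hits:
  "distinct ps \<Longrightarrow> set ps \<subseteq> set C \<Longrightarrow>
   foldl (lru_step k) C ps = rev ps @ filter (\<lambda>x. x \<notin> set ps) C \<and> faults (lru_step k) C ps = 0"
proof (induction ps arbitrary: C)
  case (Cons p ps)
  have "set ps \<subseteq> set (p # removeAll p C)"
    using Cons.prems by auto
  with Cons have "foldl (lru_step k) (p # removeAll p C) ps
      = rev ps @ filter (\<lambda>x. x \<notin> set ps) (p # removeAll p C)
    \<and> faults (lru_step k) (p # removeAll p C) ps = 0"
    by simp
  moreover have "lru_step k C p = p # removeAll p C"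
    using Cons.prems by (simp add: lru_step_def)
  ultimately show ?case
    using Cons.prems by (auto simp: removeAll_filter_not_eq intro!: filter_cong)
qed simp

lemma fifo_round_fifo_worse:
  assumes "distinct (p # y # zs)" "length zs = k - 1" "1 \<le> k"
  shows "foldl (fifo_step k) (y # zs) (zs @ p # rev zs) = zs @ [p]
       \<and> faults (fifo_step k) (y # zs) (zs @ p # rev zs) = k"
proof -
  have "foldl (fifo_step k) (y # zs) zs = y # zs \<and> faults (fifo_step k) (y # zs) zs = 0"
    by (rule fifo_hits) auto
  moreover have "foldl (fifo_step k) (y # zs) (p # rev zs) = zs @ [p]
      \<and> faults (fifo_step k) (y # zs) (p # rev zs) = k"
    using faults_cascade[OF evicts_last_fifo_step, where xs = "[]"] assms by auto
  ultimately show ?thesis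
    by (simp add: faults_append)
qed

lemma lru_round_fifo_worse:
  assumes "distinct (p # y # zs)" "length zs = k - 1"
  shows "foldl (lru_step k) (y # zs) (zs @ p # rev zs) = zs @ [p]
       \<and> faults (lru_step k) (y # zs) (zs @ p # rev zs) = 1"
proof -
  have "foldl (lru_step k) (y # zs) zs = rev zs @ [y] \<and> faults (lru_step k) (y # zs) zs = 0"
    using lru_hits[of zs "y # zs" k] assms(1) by auto
  moreover have "lru_step k (rev zs @ [y]) p = p # rev zs"
    using assms by (simp add: lru_step_def)
  moreover have "foldl (lru_step k) (p # rev zs) (rev zs) = zs @ [p]
      \<and> faults (lru_step k) (p # rev zs) (rev zs) = 0"
    using lru_hits[of "rev zs" "p # rev zs" k] assms(1) by auto
  ultimately show ?thesis
    using assms(1) by (simp add: faults_append)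
qed

lemma fifo_round_lru_worse:
  assumes "distinct (p # y # zs)" "length zs = k - 1"
  shows "foldl (fifo_step k) (rev zs @ [y]) (p # rev zs) = p # rev zs
       \<and> faults (fifo_step k) (rev zs @ [y]) (p # rev zs) = 1"
proof -
  have "fifo_step k (rev zs @ [y]) p = p # rev zs"
    using assms by (simp add: fifo_step_def)
  moreover have "foldl (fifo_step k) (p # rev zs) (rev zs) = p # rev zs
      \<and> faults (fifo_step k) (p # rev zs) (rev zs) = 0"
    by (rule fifo_hits) auto
  ultimately show ?thesis
    using assms(1) by simp
qed

lemma lru_round_lru_worse:
  assumes "distinct (p # y # zs)" "length zs = k - 1" "1 \<le> k"
  shows "foldl (lru_step k) (y # zs) (p # rev zs) = zs @ [p]
       \<and> faults (lru_step k) (y # zs) (p # rev zs) = k"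
  using faults_cascade[OF evicts_last_lru_step, where xs = "[]"] assms by auto

lemma upt_window:
  assumes "1 \<le> k"
  shows "[c..<c + k] = c # [Suc c..<c + k]" "[Suc c..<Suc c + k] = [Suc c..<c + k] @ [c + k]"
  using assms by (simp_all add: upt_conv_Cons)

definition round_fifo_worse :: "nat \<Rightarrow> nat \<Rightarrow> page list" where
  "round_fifo_worse k c = [Suc c..<c + k] @ (c + k) # rev [Suc c..<c + k]"

definition seq_fifo_worse :: "nat \<Rightarrow> nat \<Rightarrow> page list" where
  "seq_fifo_worse k m = rev [0..<k] @ concat (map (round_fifo_worse k) [0..<m])"

lemma faults_seq_fifo_worse:
  assumes "1 \<le> k"
  shows "FIFO k (seq_fifo_worse k m) = k + k * m" "LRU k (seq_fifo_worse k m) = k + m"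
    "length (seq_fifo_worse k m) = k + (2 * k - 1) * m"
proof -
  have round: "distinct ((c + k) # c # [Suc c..<c + k])" "length [Suc c..<c + k] = k - 1" for c
    using assms by auto
  have fill: "foldl step [] (rev [0..<k]) = [0..<k] \<and> faults step [] (rev [0..<k]) = k"
    if "evicts_last k step" for step
    using faults_fill[OF that, of "rev [0..<k]"] by simp
  have "foldl (fifo_step k) [0..<k] (concat (map (round_fifo_worse k) [0..<m])) = [m..<m + k]
      \<and> faults (fifo_step k) [0..<k] (concat (map (round_fifo_worse k) [0..<m])) = k * m"
    using faults_concat_rounds[of "fifo_step k" "\<lambda>c. [c..<c + k]"]
      fifo_round_fifo_worse[OF round assms] upt_window[OF assms]
    by (simp add: round_fifo_worse_def)
  with fill[OF evicts_last_fifo_step] show "FIFO k (seq_fifo_worse k m) = k + k * m"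
    by (simp add: FIFO_def fifo_faults_eq_faults seq_fifo_worse_def faults_append)
  have "foldl (lru_step k) [0..<k] (concat (map (round_fifo_worse k) [0..<m])) = [m..<m + k]
      \<and> faults (lru_step k) [0..<k] (concat (map (round_fifo_worse k) [0..<m])) = m"
    using faults_concat_rounds[of "lru_step k" "\<lambda>c. [c..<c + k]"]
      lru_round_fifo_worse[OF round] upt_window[OF assms]
    by (simp add: round_fifo_worse_def)
  with fill[OF evicts_last_lru_step] show "LRU k (seq_fifo_worse k m) = k + m"
    by (simp add: LRU_def lru_faults_eq_faults seq_fifo_worse_def faults_append)
  have "length \<circ> round_fifo_worse k = (\<lambda>_. 2 * k - 1)"
    using assms by (auto simp: round_fifo_worse_def)
  then show "length (seq_fifo_worse k m) = k + (2 * k - 1) * m"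
    by (simp add: seq_fifo_worse_def length_concat map_replicate_const sum_list_replicate)
qed

definition round_lru_worse :: "nat \<Rightarrow> nat \<Rightarrow> page list" where
  "round_lru_worse k c = (c + k) # rev [Suc c..<c + k]"

text \<open>The hits on \<open>k - 2, ..., 0\<close> reverse LRU's list but not FIFO's, as the rounds require.\<close>
definition seq_lru_worse :: "nat \<Rightarrow> nat \<Rightarrow> page list" where
  "seq_lru_worse k m = [0..<k] @ rev [0..<k - 1] @ concat (map (round_lru_worse k) [0..<m])"

lemma faults_seq_lru_worse:
  assumes "1 \<le> k"
  shows "FIFO k (seq_lru_worse k m) = k + m" "LRU k (seq_lru_worse k m) = k + k * m"
    "length (seq_lru_worse k m) = (2 * k - 1) + k * m"
proof -
  have round: "distinct ((c + k) # c # [Suc c..<c + k])" "length [Suc c..<c + k] = k - 1" for c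
    using assms by auto
  have fill: "foldl step [] [0..<k] = rev [0..<k] \<and> faults step [] [0..<k] = k"
    if "evicts_last k step" for step
    using faults_fill[OF that, of "[0..<k]"] by simp
  have window: "[0..<k] = [0..<k - 1] @ [k - 1]"
    using assms upt_Suc_append[of 0 "k - 1"] by simp
  have "foldl (fifo_step k) (rev [0..<k]) (rev [0..<k - 1]) = rev [0..<k]
      \<and> faults (fifo_step k) (rev [0..<k]) (rev [0..<k - 1]) = 0"
    by (rule fifo_hits) auto
  moreover have "foldl (fifo_step k) (rev [0..<k]) (concat (map (round_lru_worse k) [0..<m]))
      = rev [m..<m + k]
      \<and> faults (fifo_step k) (rev [0..<k]) (concat (map (round_lru_worse k) [0..<m])) = m"
    using faults_concat_rounds[of "fifo_step k" "\<lambda>c. rev [c..<c + k]"]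
      fifo_round_lru_worse[OF round] upt_window[OF assms]
    by (simp add: round_lru_worse_def)
  ultimately show "FIFO k (seq_lru_worse k m) = k + m"
    using fill[OF evicts_last_fifo_step]
    by (simp add: FIFO_def fifo_faults_eq_faults seq_lru_worse_def faults_append)
  have "foldl (lru_step k) (rev [0..<k]) (rev [0..<k - 1]) = [0..<k]
      \<and> faults (lru_step k) (rev [0..<k]) (rev [0..<k - 1]) = 0"
    using lru_hits[of "rev [0..<k - 1]" "rev [0..<k]" k] window by (auto simp: filter_False)
  moreover have "foldl (lru_step k) [0..<k] (concat (map (round_lru_worse k) [0..<m])) = [m..<m + k]
      \<and> faults (lru_step k) [0..<k] (concat (map (round_lru_worse k) [0..<m])) = k * m"
    using faults_concat_rounds[of "lru_step k" "\<lambda>c. [c..<c + k]"]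
      lru_round_lru_worse[OF round assms] upt_window[OF assms]
    by (simp add: round_lru_worse_def)
  ultimately show "LRU k (seq_lru_worse k m) = k + k * m"
    using fill[OF evicts_last_lru_step]
    by (simp add: LRU_def lru_faults_eq_faults seq_lru_worse_def faults_append)
  have "length \<circ> round_lru_worse k = (\<lambda>_. k)"
    using assms by (auto simp: round_lru_worse_def)
  then show "length (seq_lru_worse k m) = (2 * k - 1) + k * m"
    using assms
    by (simp add: seq_lru_worse_def length_concat map_replicate_const sum_list_replicate mult.commute)
qed

section \<open>The relative interval\<close>

lemma tendsto_linear_ratio:
  assumes "0 < b"
  shows "((\<lambda>m::nat. a * real m / (s + b * real m)) \<longlongrightarrow> a / b) sequentially"
proof -
  have "((\<lambda>m::nat. a / (s / real m + b)) \<longlongrightarrow> a / (0 + b)) sequentially"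
    using assms by (intro tendsto_intros tendsto_divide_0[OF tendsto_const]
        filterlim_at_top_imp_at_infinity[OF filterlim_real_sequentially]) auto
  moreover have "\<forall>\<^sub>F m in sequentially. a / (s / real m + b) = a * real m / (s + b * real m)"
    using eventually_ge_at_top[of "1::nat"] by eventually_elim (simp add: field_simps)
  ultimately show ?thesis
    by (simp add: tendsto_cong)
qed

lemma limsup_ratio_eq:
  fixes x :: "nat \<Rightarrow> int" and a b s :: nat
  assumes "0 < b" and upper: "\<And>n. int b * x n \<le> int a * int n"
    and lower: "\<And>m. int a * int m \<le> x (s + b * m)"
  shows "limsup (\<lambda>n. ereal (x n / n)) = ereal (a / b)"
proof (rule antisym)
  have "x n / n \<le> a / b" for n
  proof (cases "n = 0")
    case False
    have "real b * x n \<le> real a * real n"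
      using upper[of n] by (metis of_int_le_iff of_int_mult of_int_of_nat_eq)
    with False assms(1) show ?thesis
      by (simp add: field_simps mult.commute)
  qed simp
  then show "limsup (\<lambda>n. ereal (x n / n)) \<le> ereal (a / b)"
    by (intro Limsup_bounded) simp
next
  let ?r = "\<lambda>m. s + b * m"
  have "strict_mono ?r"
    using assms(1) by (intro strict_monoI) simp
  have "real a * real m \<le> x (?r m)" for m
    using lower[of m] by (metis of_int_le_iff of_int_mult of_int_of_nat_eq)
  then have "ereal (a * real m / (s + b * real m)) \<le> ((\<lambda>n. ereal (x n / n)) \<circ> ?r) m" for m
    by (simp add: divide_right_mono)
  then have "limsup (\<lambda>m. ereal (a * real m / (s + b * real m)))
      \<le> limsup ((\<lambda>n. ereal (x n / n)) \<circ> ?r)"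
    by (intro Limsup_mono) simp
  also have "\<dots> \<le> limsup (\<lambda>n. ereal (x n / n))"
    using \<open>strict_mono ?r\<close> by (rule limsup_subseq_mono)
  finally show "ereal (a / b) \<le> limsup (\<lambda>n. ereal (x n / n))"
    using lim_imp_Limsup[OF trivial_limit_sequentially
        tendsto_ereal[OF tendsto_linear_ratio[of b a s]]] assms(1)
    by simp
qed

lemma finite_fault_differences:
  assumes "\<And>I. A I \<le> length I" "\<And>I. B I \<le> length I"
  shows "finite {int (A I) - int (B I) | I. length I = n}"
proof (rule finite_subset)
  have "- int n \<le> int (A I) - int (B I) \<and> int (A I) - int (B I) \<le> int n" if "length I = n" for I
    using assms[of I] that by simp
  then show "{int (A I) - int (B I) | I. length I = n} \<subseteq> {- int n..int n}"
    by auto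
qed simp

lemma MaxAB_attained:
  assumes "\<And>I. A I \<le> length I" "\<And>I. B I \<le> length I"
  shows "\<exists>I. length I = n \<and> MaxAB A B n = int (A I) - int (B I)"
proof -
  have "{int (A I) - int (B I) | I. length I = n} \<noteq> {}"
    by (auto intro: exI[of _ "replicate n 0"])
  from Max_in[OF finite_fault_differences[OF assms] this] show ?thesis
    by (auto simp: MaxAB_def)
qed

lemma MaxAB_ge:
  assumes "\<And>I. A I \<le> length I" "\<And>I. B I \<le> length I" "length I = n"
  shows "int (A I) - int (B I) \<le> MaxAB A B n"
  unfolding MaxAB_def
  by (intro Max_ge finite_fault_differences assms(1,2)) (use assms(3) in auto)

lemma MinAB_eq_uminus_MaxAB:
  assumes "\<And>I. A I \<le> length I" "\<And>I. B I \<le> length I"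
  shows "MinAB A B n = - MaxAB B A n"
  unfolding MinAB_def
proof (rule Min_eqI)
  show "finite {int (A I) - int (B I) | I. length I = n}"
    using assms by (rule finite_fault_differences)
  show "- MaxAB B A n \<le> y" if y: "y \<in> {int (A I) - int (B I) | I. length I = n}" for y
  proof -
    obtain I where "length I = n" "y = int (A I) - int (B I)"
      using y by blast
    with MaxAB_ge[OF assms(2,1) this(1)] show ?thesis by linarith
  qed
  obtain I where "length I = n" "MaxAB B A n = int (B I) - int (A I)"
    using MaxAB_attained[OF assms(2,1)] by blast
  then have "length I = n \<and> - MaxAB B A n = int (A I) - int (B I)"
    by simp
  then show "- MaxAB B A n \<in> {int (A I) - int (B I) | I. length I = n}"
    by blast
qed

lemma MinRel_eq_uminus_MaxRel:
  assumes "\<And>I. A I \<le> length I" "\<And>I. B I \<le> length I"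
  shows "MinRel A B = - MaxRel B A"
proof -
  have "(\<lambda>n. ereal (real_of_int (MinAB A B n) / real n))
      = (\<lambda>n. - ereal (real_of_int (MaxAB B A n) / real n))"
    by (simp add: MinAB_eq_uminus_MaxAB[OF assms])
  then show ?thesis
    unfolding MinRel_def MaxRel_def by (simp only: ereal_Liminf_uminus)
qed

lemma MaxRel_eq:
  assumes "\<And>I. A I \<le> length I" "\<And>I. B I \<le> length I" "0 < b"
    and "\<And>I. int b * (int (A I) - int (B I)) \<le> int a * int (length I)"
    and "\<And>m. \<exists>I. length I = s + b * m \<and> int a * int m \<le> int (A I) - int (B I)"
  shows "MaxRel A B = ereal (a / b)"
  unfolding MaxRel_def
proof (rule limsup_ratio_eq)
  show "int b * MaxAB A B n \<le> int a * int n" for n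
    using MaxAB_attained[OF assms(1,2), of n] assms(4) by force
  show "int a * int m \<le> MaxAB A B (s + b * m)" for m
  proof -
    obtain I where "length I = s + b * m" "int a * int m \<le> int (A I) - int (B I)"
      using assms(5) by blast
    with MaxAB_ge[OF assms(1,2) this(1)] show ?thesis by linarith
  qed
qed (rule assms(3))

lemma MaxRel_FIFO_LRU:
  assumes "1 \<le> k"
  shows "MaxRel (FIFO k) (LRU k) = ereal (real (k - 1) / real (2 * k - 1))"
proof (rule MaxRel_eq[OF FIFO_le_length LRU_le_length])
  show "int (2 * k - 1) * (int (FIFO k I) - int (LRU k I)) \<le> int (k - 1) * int (length I)" for I
    using fifo_minus_lru_le[OF assms, of I] assms by (simp add: of_nat_diff)
  show "\<exists>I. length I = k + (2 * k - 1) * m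
      \<and> int (k - 1) * int m \<le> int (FIFO k I) - int (LRU k I)" for m
    using faults_seq_fifo_worse[OF assms, of m] assms
    by (intro exI[of _ "seq_fifo_worse k m"]) (simp add: algebra_simps of_nat_diff)
qed (use assms in simp)

lemma MaxRel_LRU_FIFO:
  assumes "1 \<le> k"
  shows "MaxRel (LRU k) (FIFO k) = ereal (real (k - 1) / real k)"
proof (rule MaxRel_eq[OF LRU_le_length FIFO_le_length])
  show "int k * (int (LRU k I) - int (FIFO k I)) \<le> int (k - 1) * int (length I)" for I
    using lru_minus_fifo_le[OF assms, of I] assms by (simp add: of_nat_diff)
  show "\<exists>I. length I = (2 * k - 1) + k * m
      \<and> int (k - 1) * int m \<le> int (LRU k I) - int (FIFO k I)" for m
    using faults_seq_lru_worse[OF assms, of m] assms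
    by (intro exI[of _ "seq_lru_worse k m"]) (simp add: algebra_simps of_nat_diff)
qed (use assms in simp)

theorem theorem1:
  fixes k :: nat
  assumes "k \<ge> 1"
  shows "rel_interval (FIFO k) (LRU k) =
           (ereal (-1 + 1 / real k), ereal (1/2 - 1 / (4 * real k - 2)))"
proof -
  have "MinRel (FIFO k) (LRU k) = - ereal (real (k - 1) / real k)"
    using MinRel_eq_uminus_MaxRel[OF FIFO_le_length[of k] LRU_le_length[of k]]
      MaxRel_LRU_FIFO[OF assms]
    by simp
  moreover have "- ((real k - 1) / real k) = -1 + 1 / real k"
    using assms by (simp add: field_simps)
  moreover have "(real k - 1) / (2 * real k - 1) = 1/2 - 1 / (4 * real k - 2)"
    using assms by (simp add: field_simps)
  ultimately show ?thesis
    using MaxRel_FIFO_LRU[OF assms] assms by (simp add: rel_interval_def of_nat_diff)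
qed

end
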